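(* Let $N$ be a normal subgroup of a finite group $G$ and let $\eta^*(N)$ be the number of $G$-orbits on the set of $N$-conjugacy classes of maximal cyclic subgroups of $N$. Then $\eta(G) \ge \eta^*(N)$. In particular: (i) if $N$ is central in $G$, then $\eta(G) \ge \eta(N)$; (ii) if $|G:N| = k$, then $\eta(G) \ge \eta(N)/k$.
   Context: A cyclic subgroup $C$ of a finite group $G$ is maximal cyclic if there is no cyclic subgroup $D$ of $G$ with $C < D$. $\eta(G)$ denotes the number of conjugacy classes of maximal cyclic subgroups of $G$. *)

theory Defs
  imports "HOL-Algebra.Algebra"
begin

definition cyclic_subgroups :: "('a, 'b) monoid_scheme \<Rightarrow> 'a set set" where
  "cyclic_subgroups G = {generate G {x} | x. x \<in> carrier G}"

definition max_cyclic_subgroups :: "('a, 'b) monoid_scheme \<Rightarrow> 'a set set" where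
  "max_cyclic_subgroups G =
     {C \<in> cyclic_subgroups G. \<not> (\<exists>D \<in> cyclic_subgroups G. C \<subset> D)}"

definition conj_by :: "('a, 'b) monoid_scheme \<Rightarrow> 'a \<Rightarrow> 'a set \<Rightarrow> 'a set" where
  "conj_by G g H = (\<lambda>h. g \<otimes>\<^bsub>G\<^esub> h \<otimes>\<^bsub>G\<^esub> inv\<^bsub>G\<^esub> g) ` H"

definition max_cyclic_classes :: "('a, 'b) monoid_scheme \<Rightarrow> 'a set set set" where
  "max_cyclic_classes G =
     {{conj_by G g C | g. g \<in> carrier G} | C. C \<in> max_cyclic_subgroups G}"

definition eta :: "('a, 'b) monoid_scheme \<Rightarrow> nat" where
  "eta G = card (max_cyclic_classes G)"

definition eta_star :: "('a, 'b) monoid_scheme \<Rightarrow> 'a set \<Rightarrow> nat" where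
  "eta_star G N =
     card {{image (conj_by G g) Q | g. g \<in> carrier G} | Q.
            Q \<in> max_cyclic_classes (subgroup_generated G N)}"

end

theory Submission
  imports Defs
begin

(* Each maximal cyclic subgroup C of N equals M \<inter> N for some maximal cyclic subgroup M of G:
   take any maximal cyclic M containing C; then M \<inter> N, a subgroup of a cyclic group, is a cyclic
   subgroup of N containing C. As N is normal, conjugating M by g conjugates M \<inter> N by g, so the
   G-class of M determines the G-orbit of the N-class of C, and every such orbit arises in this
   way; hence eta*(N) \<le> eta(G). The N-class of g C g^-1 depends only on the coset N g, so each
   orbit consists of at most |G:N| N-classes, whence eta(N) \<le> |G:N| eta*(N). If N is central,
   every orbit is a singleton and eta(N) = eta*(N). *)

definition cyclic_subgroups_in :: "('a, 'b) monoid_scheme \<Rightarrow> 'a set \<Rightarrow> 'a set set" where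
  "cyclic_subgroups_in G H = {generate G {x} | x. x \<in> H}"

definition max_cyclic_subgroups_in :: "('a, 'b) monoid_scheme \<Rightarrow> 'a set \<Rightarrow> 'a set set" where
  "max_cyclic_subgroups_in G H =
     {C \<in> cyclic_subgroups_in G H. \<not> (\<exists>D \<in> cyclic_subgroups_in G H. C \<subset> D)}"

definition conj_orbit :: "('a, 'b) monoid_scheme \<Rightarrow> 'a set \<Rightarrow> 'a set \<Rightarrow> 'a set set" where
  "conj_orbit G H C = {conj_by G h C | h. h \<in> H}"

definition class_orbit :: "('a, 'b) monoid_scheme \<Rightarrow> 'a set \<Rightarrow> 'a set \<Rightarrow> 'a set set set" where
  "class_orbit G N C = {conj_orbit G N (conj_by G g C) | g. g \<in> carrier G}"

context group
begin

lemma conj_by_one [simp]: "C \<subseteq> carrier G \<Longrightarrow> conj_by G \<one> C = C"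
  unfolding conj_by_def by (force simp: subset_iff)

lemma conj_by_mult:
  "C \<subseteq> carrier G \<Longrightarrow> g \<in> carrier G \<Longrightarrow> h \<in> carrier G \<Longrightarrow>
   conj_by G g (conj_by G h C) = conj_by G (g \<otimes> h) C"
  unfolding conj_by_def image_image
  by (intro image_cong refl) (auto simp: inv_mult_group m_assoc)

lemma conj_by_Int:
  "A \<subseteq> carrier G \<Longrightarrow> B \<subseteq> carrier G \<Longrightarrow> g \<in> carrier G \<Longrightarrow>
   conj_by G g (A \<inter> B) = conj_by G g A \<inter> conj_by G g B"
  unfolding conj_by_def by (rule inj_on_image_Int[of _ "carrier G"]) (auto simp: inj_on_def)

lemma conj_by_central:
  assumes "C \<subseteq> carrier G" and "g \<in> carrier G" and "\<forall>c\<in>C. c \<otimes> g = g \<otimes> c"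
  shows "conj_by G g C = C"
proof -
  have "g \<otimes> c \<otimes> inv g = c" if "c \<in> C" for c
    using assms that by (metis inv_solve_right m_closed subsetD)
  then show ?thesis unfolding conj_by_def by force
qed

end

lemma (in normal) conj_by_normal_subgroup:
  assumes "g \<in> carrier G"
  shows "conj_by G g H = H"
proof
  show "conj_by G g H \<subseteq> H"
    using assms inv_op_closed2 unfolding conj_by_def by auto
  show "H \<subseteq> conj_by G g H"
  proof
    fix h assume "h \<in> H"
    have "inv g \<otimes> h \<otimes> g \<in> H"
      using assms \<open>h \<in> H\<close> inv_op_closed1 by (simp add: m_assoc)
    moreover have "h = g \<otimes> (inv g \<otimes> h \<otimes> g) \<otimes> inv g"
      using assms \<open>h \<in> H\<close> by (simp add: m_assoc[symmetric]) (simp add: m_assoc)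
    ultimately show "h \<in> conj_by G g H" unfolding conj_by_def by blast
  qed
qed

context group
begin

lemma max_cyclic_subgroups_in_subset_carrier:
  "H \<subseteq> carrier G \<Longrightarrow> C \<in> max_cyclic_subgroups_in G H \<Longrightarrow> C \<subseteq> carrier G"
  unfolding max_cyclic_subgroups_in_def cyclic_subgroups_in_def using generate_incl by blast

lemma finite_max_cyclic_subgroups_in:
  "finite H \<Longrightarrow> finite (max_cyclic_subgroups_in G H)"
  unfolding max_cyclic_subgroups_in_def cyclic_subgroups_in_def by (simp add: Setcompr_eq_image)

lemma max_cyclic_subgroups_eq: "max_cyclic_subgroups G = max_cyclic_subgroups_in G (carrier G)"
  unfolding max_cyclic_subgroups_def max_cyclic_subgroups_in_def
    cyclic_subgroups_def cyclic_subgroups_in_def ..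

lemma max_cyclic_subgroups_subgroup_generated:
  assumes "subgroup H G"
  shows "max_cyclic_subgroups (subgroup_generated G H) = max_cyclic_subgroups_in G H"
proof -
  have "subgroup_generated G H = G\<lparr>carrier := H\<rparr>"
    using subgroup.carrier_subgroup_generated_subgroup[OF assms]
    unfolding subgroup_generated_def carrier_subgroup_generated by simp
  then have "generate (subgroup_generated G H) {x} = generate G {x}" if "x \<in> H" for x
    using generate_consistent[of "{x}" H] assms that by simp
  then have "cyclic_subgroups (subgroup_generated G H) = cyclic_subgroups_in G H"
    unfolding cyclic_subgroups_def cyclic_subgroups_in_def
    using subgroup.carrier_subgroup_generated_subgroup[OF assms] by auto
  then show ?thesis
    unfolding max_cyclic_subgroups_def max_cyclic_subgroups_in_def by simp
qed

lemma exists_max_cyclic_subgroup_in_above: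
  assumes "finite H" and "x \<in> H"
  obtains M where "M \<in> max_cyclic_subgroups_in G H" and "generate G {x} \<subseteq> M"
proof -
  have "finite (cyclic_subgroups_in G H)"
    using assms(1) unfolding cyclic_subgroups_in_def by (simp add: Setcompr_eq_image)
  moreover have "generate G {x} \<in> cyclic_subgroups_in G H"
    using assms(2) unfolding cyclic_subgroups_in_def by auto
  ultimately obtain M where "M \<in> cyclic_subgroups_in G H" "generate G {x} \<subseteq> M"
      "\<forall>D \<in> cyclic_subgroups_in G H. M \<subseteq> D \<longrightarrow> M = D"
    by (meson finite_has_maximal2)
  then have "M \<in> max_cyclic_subgroups_in G H"
    unfolding max_cyclic_subgroups_in_def by auto
  then show thesis using that \<open>generate G {x} \<subseteq> M\<close> by blast
qed

lemma subgroup_of_cyclic_is_cyclic: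
  assumes fin: "finite (carrier G)" and y: "y \<in> carrier G" and K: "subgroup K G"
    and K_le: "K \<subseteq> generate G {y}"
  obtains z where "z \<in> K" and "K = generate G {z}"
proof -
  have powers: "generate G {a} = {a [^] k | k. k \<in> (UNIV :: nat set)}" if "a \<in> carrier G" for a
    using generate_pow_on_finite_carrier[OF fin that] .
  define d :: nat where "d = (LEAST k::nat. 0 < k \<and> y [^] k \<in> K)"
  have "0 < ord y \<and> y [^] ord y \<in> K"
    using ord_ge_1[OF fin y] y subgroup.one_closed[OF K] by simp
  then have d: "0 < d \<and> y [^] d \<in> K"
    unfolding d_def by (rule LeastI)
  define z where "z = y [^] d"
  have z: "z \<in> K" "z \<in> carrier G" using d y unfolding z_def by auto
  have "K \<subseteq> generate G {z}"
  proof
    fix h assume "h \<in> K"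
    then obtain k :: nat where k: "h = y [^] k" using K_le powers[OF y] by auto
    have split: "h = z [^] (k div d) \<otimes> y [^] (k mod d)"
      using y by (simp add: k z_def nat_pow_pow nat_pow_mult)
    have "z [^] (k div d) \<in> K"
      using subgroup_int_pow_closed[OF K z(1), of "int (k div d)"] by (simp add: int_pow_int)
    then have "y [^] (k mod d) = inv (z [^] (k div d)) \<otimes> h"
      using split y z \<open>h \<in> K\<close> subgroup.mem_carrier[OF K] by (simp add: inv_solve_left)
    also have "\<dots> \<in> K"
      using \<open>z [^] (k div d) \<in> K\<close> \<open>h \<in> K\<close> K
      by (simp add: subgroup.m_closed subgroup.m_inv_closed)
    finally have "k mod d = 0"
      using not_less_Least[of "k mod d" "\<lambda>k. 0 < k \<and> y [^] k \<in> K"] d unfolding d_def by auto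
    then show "h \<in> generate G {z}"
      using split y z(2) powers[OF z(2)] by auto
  qed
  moreover have "generate G {z} \<subseteq> K"
    using generate_subgroup_incl[OF _ K] z by auto
  ultimately show thesis using that z by blast
qed

lemma max_cyclic_subgroup_in_as_Int:
  assumes fin: "finite (carrier G)" and N: "subgroup N G"
    and C: "C \<in> max_cyclic_subgroups_in G N"
  obtains M where "M \<in> max_cyclic_subgroups G" and "M \<inter> N = C"
proof -
  obtain x where x: "x \<in> N" "C = generate G {x}"
    using C unfolding max_cyclic_subgroups_in_def cyclic_subgroups_in_def by auto
  obtain M where M: "M \<in> max_cyclic_subgroups G" "C \<subseteq> M"
    using exists_max_cyclic_subgroup_in_above[OF fin, of x] x subgroup.mem_carrier[OF N]
    unfolding max_cyclic_subgroups_eq by auto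
  obtain y where y: "y \<in> carrier G" "M = generate G {y}"
    using M(1) unfolding max_cyclic_subgroups_eq max_cyclic_subgroups_in_def
      cyclic_subgroups_in_def by auto
  have "subgroup (M \<inter> N) G"
    using subgroups_Inter_pair[OF generate_is_subgroup N] y by auto
  then obtain z where "z \<in> M \<inter> N" and "M \<inter> N = generate G {z}"
    using subgroup_of_cyclic_is_cyclic[OF fin y(1)] y(2) by (metis inf_le1)
  then have "M \<inter> N \<in> cyclic_subgroups_in G N"
    unfolding cyclic_subgroups_in_def by auto
  moreover have "C \<subseteq> M \<inter> N"
    using M(2) x generate_subgroup_incl[OF _ N] by auto
  ultimately have "M \<inter> N = C"
    using C unfolding max_cyclic_subgroups_in_def by auto
  with M(1) show thesis by (rule that)
qed

lemma conj_orbit_conj_by_eq_image_rcos: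
  assumes "N \<subseteq> carrier G" and "C \<subseteq> carrier G" and "g \<in> carrier G"
  shows "conj_orbit G N (conj_by G g C) = (\<lambda>a. conj_by G a C) ` (N #> g)"
proof -
  have "conj_orbit G N (conj_by G g C) = (\<lambda>h. conj_by G (h \<otimes> g) C) ` N"
    unfolding conj_orbit_def Setcompr_eq_image using assms
    by (intro image_cong refl) (simp add: conj_by_mult subsetD)
  then show ?thesis unfolding r_coset_def by auto
qed

lemma image_conj_by_conj_orbit_eq_image_lcos:
  assumes "N \<subseteq> carrier G" and "C \<subseteq> carrier G" and "g \<in> carrier G"
  shows "conj_by G g ` conj_orbit G N C = (\<lambda>a. conj_by G a C) ` (g <# N)"
proof -
  have "conj_by G g ` conj_orbit G N C = (\<lambda>h. conj_by G (g \<otimes> h) C) ` N"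
    unfolding conj_orbit_def Setcompr_eq_image image_image using assms
    by (intro image_cong refl) (simp add: conj_by_mult subsetD)
  then show ?thesis unfolding l_coset_def by auto
qed

lemma class_orbit_eq_image_carrier:
  "class_orbit G N C = (\<lambda>g. conj_orbit G N (conj_by G g C)) ` carrier G"
  unfolding class_orbit_def by auto

lemma class_orbit_eq_image_rcosets:
  assumes "N \<subseteq> carrier G" and "C \<subseteq> carrier G"
  shows "class_orbit G N C = (\<lambda>R. (\<lambda>a. conj_by G a C) ` R) ` (rcosets N)"
  unfolding class_orbit_eq_image_carrier RCOSETS_def image_UN
  using conj_orbit_conj_by_eq_image_rcos[OF assms] by auto

lemma card_class_orbit_le_index:
  assumes "finite (carrier G)" and "N \<subseteq> carrier G" and "C \<subseteq> carrier G"
  shows "card (class_orbit G N C) \<le> card (rcosets N)"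
  unfolding class_orbit_eq_image_rcosets[OF assms(2,3)]
  by (rule card_image_le) (simp add: RCOSETS_def assms(1))

lemma class_orbit_conj_by:
  assumes "C \<subseteq> carrier G" and "g \<in> carrier G"
  shows "class_orbit G N (conj_by G g C) = class_orbit G N C"
proof -
  have "class_orbit G N (conj_by G g C) = (\<lambda>a. conj_orbit G N (conj_by G (a \<otimes> g) C)) ` carrier G"
    unfolding class_orbit_eq_image_carrier using assms
    by (intro image_cong refl) (simp add: conj_by_mult)
  also have "\<dots> = (\<lambda>a. conj_orbit G N (conj_by G a C)) ` (carrier G #> g)"
    unfolding r_coset_def by auto
  also have "carrier G #> g = carrier G"
    using coset_join2[OF assms(2) subgroup_self assms(2)] .
  finally show ?thesis
    unfolding class_orbit_eq_image_carrier .
qed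

end

lemma (in normal) image_conj_by_conj_orbit:
  assumes "C \<subseteq> carrier G" and "g \<in> carrier G"
  shows "conj_by G g ` conj_orbit G H C = conj_orbit G H (conj_by G g C)"
  using image_conj_by_conj_orbit_eq_image_lcos conj_orbit_conj_by_eq_image_rcos
    coset_eq subset assms by simp

context group
begin

lemma max_cyclic_classes_eq:
  "max_cyclic_classes G = conj_orbit G (carrier G) ` max_cyclic_subgroups G"
  unfolding max_cyclic_classes_def conj_orbit_def by blast

lemma max_cyclic_classes_subgroup_generated:
  assumes "subgroup N G"
  shows "max_cyclic_classes (subgroup_generated G N) = conj_orbit G N ` max_cyclic_subgroups_in G N"
proof -
  have "conj_by (subgroup_generated G N) n C = conj_by G n C" if "n \<in> N" for n C
    using that subgroup.carrier_subgroup_generated_subgroup[OF assms]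
    unfolding conj_by_def by simp
  then have "{conj_by (subgroup_generated G N) n C | n. n \<in> carrier (subgroup_generated G N)}
      = conj_orbit G N C" for C
    unfolding conj_orbit_def using subgroup.carrier_subgroup_generated_subgroup[OF assms] by auto
  then show ?thesis
    unfolding max_cyclic_classes_def max_cyclic_subgroups_subgroup_generated[OF assms] by auto
qed

lemma eta_star_eq_card_class_orbits:
  assumes "N \<lhd> G"
  shows "eta_star G N = card (class_orbit G N ` max_cyclic_subgroups_in G N)"
proof -
  interpret normal N G by fact
  have "{conj_by G g ` conj_orbit G N C | g. g \<in> carrier G} = class_orbit G N C"
    if "C \<in> max_cyclic_subgroups_in G N" for C
    using image_conj_by_conj_orbit max_cyclic_subgroups_in_subset_carrier[OF subset that]
    unfolding class_orbit_eq_image_carrier Setcompr_eq_image by (intro image_cong refl) simp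
  then show ?thesis
    unfolding eta_star_def max_cyclic_classes_subgroup_generated[OF is_subgroup]
    by (auto intro!: arg_cong[where f = card])
qed

lemma eta_star_le_eta:
  assumes fin: "finite (carrier G)" and N: "N \<lhd> G"
  shows "eta_star G N \<le> eta G"
proof -
  interpret normal N G by (rule N)
  define orbit_of_class where "orbit_of_class K = class_orbit G N ((SOME M. M \<in> K) \<inter> N)" for K
  have "class_orbit G N ` max_cyclic_subgroups_in G N \<subseteq> orbit_of_class ` max_cyclic_classes G"
  proof
    fix E assume "E \<in> class_orbit G N ` max_cyclic_subgroups_in G N"
    then obtain C where C: "C \<in> max_cyclic_subgroups_in G N" and E: "E = class_orbit G N C"
      by blast
    obtain M where M: "M \<in> max_cyclic_subgroups G" and MN: "M \<inter> N = C"
      using max_cyclic_subgroup_in_as_Int[OF fin is_subgroup C] .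
    have MG: "M \<subseteq> carrier G"
      using M max_cyclic_subgroups_in_subset_carrier unfolding max_cyclic_subgroups_eq by blast
    let ?K = "conj_orbit G (carrier G) M"
    have "M \<in> ?K" unfolding conj_orbit_def using conj_by_one[OF MG] by force
    then have "(SOME M'. M' \<in> ?K) \<in> ?K" by (rule someI)
    then obtain g where g: "g \<in> carrier G" "(SOME M'. M' \<in> ?K) = conj_by G g M"
      unfolding conj_orbit_def by auto
    have "orbit_of_class ?K = class_orbit G N (conj_by G g (M \<inter> N))"
      unfolding orbit_of_class_def g(2)
      using conj_by_Int[OF MG subset g(1)] conj_by_normal_subgroup[OF g(1)] by simp
    also have "\<dots> = E"
      using class_orbit_conj_by[of "M \<inter> N" g N] MG g(1) MN E by auto
    finally show "E \<in> orbit_of_class ` max_cyclic_classes G"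
      using M unfolding max_cyclic_classes_eq by blast
  qed
  moreover have "finite (max_cyclic_classes G)"
    using finite_max_cyclic_subgroups_in[OF fin]
    unfolding max_cyclic_classes_eq max_cyclic_subgroups_eq by simp
  ultimately show ?thesis
    unfolding eta_star_eq_card_class_orbits[OF N] eta_def by (rule surj_card_le[rotated])
qed

lemma eta_le_index_mult_eta_star:
  assumes fin: "finite (carrier G)" and N: "N \<lhd> G"
  shows "eta (subgroup_generated G N) \<le> card (rcosets N) * eta_star G N"
proof -
  interpret normal N G by (rule N)
  let ?orbits = "class_orbit G N ` max_cyclic_subgroups_in G N"
  have NG: "N \<subseteq> carrier G" by (rule subset)
  have CG: "C \<subseteq> carrier G" if "C \<in> max_cyclic_subgroups_in G N" for C
    using max_cyclic_subgroups_in_subset_carrier[OF NG that] .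
  have fin_N: "finite N" using finite_subset[OF NG fin] .
  have "conj_orbit G N ` max_cyclic_subgroups_in G N \<subseteq> \<Union> ?orbits"
  proof
    fix Q assume "Q \<in> conj_orbit G N ` max_cyclic_subgroups_in G N"
    then obtain C where C: "C \<in> max_cyclic_subgroups_in G N" and Q: "Q = conj_orbit G N C"
      by (rule imageE)
    have "conj_orbit G N (conj_by G \<one> C) \<in> class_orbit G N C"
      unfolding class_orbit_eq_image_carrier using one_closed by blast
    then have "Q \<in> class_orbit G N C" using Q CG[OF C] by simp
    then show "Q \<in> \<Union> ?orbits" using C by (rule UN_I[rotated])
  qed
  moreover have "finite (\<Union> ?orbits)"
  proof (rule finite_Union)
    show "finite ?orbits" using finite_max_cyclic_subgroups_in[OF fin_N] by (rule finite_imageI)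
    show "finite E" if "E \<in> ?orbits" for E
      using that fin by (auto simp: class_orbit_eq_image_carrier)
  qed
  ultimately have "eta (subgroup_generated G N) \<le> card (\<Union> ?orbits)"
    unfolding eta_def max_cyclic_classes_subgroup_generated[OF is_subgroup]
    by (intro card_mono)
  also have "\<dots> \<le> sum card ?orbits"
    by (rule card_Union_le_sum_card)
  also have "\<dots> \<le> card ?orbits * card (rcosets N)"
  proof -
    have "card E \<le> card (rcosets N)" if "E \<in> ?orbits" for E
      using that card_class_orbit_le_index[OF fin NG CG] by auto
    then show ?thesis using sum_bounded_above[of ?orbits card "card (rcosets N)"] by simp
  qed
  finally show ?thesis
    unfolding eta_star_eq_card_class_orbits[OF N] by (simp add: mult.commute)
qed

lemma eta_star_eq_eta_if_central:
  assumes N: "N \<lhd> G" and central: "\<forall>n\<in>N. \<forall>g\<in>carrier G. n \<otimes> g = g \<otimes> n"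
  shows "eta_star G N = eta (subgroup_generated G N)"
proof -
  interpret normal N G by (rule N)
  have fixed: "conj_by G g C = C" if "C \<in> max_cyclic_subgroups_in G N" "g \<in> carrier G" for C g
  proof -
    have "C \<subseteq> N"
      using that(1) generate_subgroup_incl[OF _ is_subgroup]
      unfolding max_cyclic_subgroups_in_def cyclic_subgroups_in_def by auto
    moreover have "\<forall>c\<in>C. c \<otimes> g = g \<otimes> c"
      using \<open>C \<subseteq> N\<close> central that(2) by blast
    ultimately show ?thesis
      using conj_by_central[OF _ that(2)] subset by (meson order_trans)
  qed
  have class_single: "conj_orbit G N C = {C}" if "C \<in> max_cyclic_subgroups_in G N" for C
  proof -
    have "conj_orbit G N C = (\<lambda>h. C) ` N"
      unfolding conj_orbit_def Setcompr_eq_image using fixed[OF that] subset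
      by (intro image_cong refl) blast
    moreover have "N \<noteq> {}" using subgroup.one_closed[OF is_subgroup] by blast
    ultimately show ?thesis by (simp add: image_constant_conv)
  qed
  have orbit_single: "class_orbit G N C = {{C}}" if "C \<in> max_cyclic_subgroups_in G N" for C
  proof -
    have "class_orbit G N C = (\<lambda>g. {C}) ` carrier G"
      unfolding class_orbit_eq_image_carrier using fixed[OF that] class_single[OF that]
      by (intro image_cong refl) simp
    then show ?thesis by auto
  qed
  have "eta_star G N = card ((\<lambda>C. {{C}}) ` max_cyclic_subgroups_in G N)"
    unfolding eta_star_eq_card_class_orbits[OF N] using orbit_single by (simp cong: image_cong)
  also have "\<dots> = card ((\<lambda>C. {C}) ` max_cyclic_subgroups_in G N)"
    by (simp add: card_image inj_on_def)
  also have "\<dots> = eta (subgroup_generated G N)"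
    unfolding eta_def max_cyclic_classes_subgroup_generated[OF is_subgroup]
    using class_single by (simp cong: image_cong)
  finally show ?thesis .
qed

end

theorem proposition2p3:
  fixes G :: "('a, 'b) monoid_scheme" and N :: "'a set"
  assumes "group G" and "finite (carrier G)" and "N \<lhd> G"
  shows "eta_star G N \<le> eta G
    \<and> ((\<forall>n\<in>N. \<forall>g\<in>carrier G. n \<otimes>\<^bsub>G\<^esub> g = g \<otimes>\<^bsub>G\<^esub> n)
           \<longrightarrow> eta (subgroup_generated G N) \<le> eta G)
    \<and> (\<forall>k::nat. card (rcosets\<^bsub>G\<^esub> N) = k
           \<longrightarrow> real (eta (subgroup_generated G N)) / real k \<le> real (eta G))"
proof -
  interpret group G by fact
  have le: "eta_star G N \<le> eta G"
    using eta_star_le_eta[OF assms(2,3)] .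
  have central: "eta (subgroup_generated G N) \<le> eta G"
    if "\<forall>n\<in>N. \<forall>g\<in>carrier G. n \<otimes>\<^bsub>G\<^esub> g = g \<otimes>\<^bsub>G\<^esub> n"
    using eta_star_eq_eta_if_central[OF assms(3) that] le by simp
  have index: "real (eta (subgroup_generated G N)) / real k \<le> real (eta G)"
    if "card (rcosets\<^bsub>G\<^esub> N) = k" for k
  proof -
    have "eta (subgroup_generated G N) \<le> k * eta G"
      using eta_le_index_mult_eta_star[OF assms(2,3)] le that
      by (metis mult_le_mono2 order_trans)
    then show ?thesis
      by (cases "k = 0") (simp_all add: divide_le_eq mult.commute flip: of_nat_mult)
  qed
  show ?thesis using le central index by blast
qed

end
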